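(* Let $a_1<a_2<\dots<a_n$ be positive integers with $a_i\le 2i-1$ for all $i$. Then $$\sum_{k=1}^{n}\det_{1\le i,j\le n}\left[\frac{1}{(a_i-j)!}\cdot\begin{cases}1 & i\ne k\\ (a_i-j)(a_i-j-1) & i=k\end{cases}\right]=\left(\sum_{k=1}^n (a_k-k)(a_k-2n+k-1)\right)\det_{1\le i,j\le n}\left[\frac{1}{(a_i-j)!}\right].$$
   Context: Convention: $1/m!=0$ for negative integers $m$ (so the corresponding matrix entries vanish). *)

theory Defs
  imports "Jordan_Normal_Form.Determinant"
begin

definition inv_fact :: "int \<Rightarrow> real" where
  "inv_fact m = (if m < 0 then 0 else 1 / fact (nat m))"

end

theory Submission
  imports Defs
begin

(*
  For an n x n matrix A and a "direction" B, let det_deriv n A B be the sum over k of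
  det A with its k-th row replaced by the k-th row of B; it is the derivative of
  det (A + t B) at t = 0 and is linear in B.  Expanding over permutations gives
  (i)   det_deriv n A (g_i A_ij) = (sum of g) * det A            (row weights),
  (ii)  det_deriv n A (h_j A_ij) = (sum of h) * det A            (column weights),
  (iii) if column j of B is column j+1 of A for all j < n-1, then all but the last of
        the column-replaced determinants vanish, so det_deriv n A (h_j B_ij) =
        h_(n-1) * det_deriv n A B.
  We apply this to the matrices F_s with entries 1/(a_i - j - s)!, for which
  F_(s+1) = (a_i - j - s) F_s and F_(s+1) is F_s shifted by one column.  The left-hand
  side of the theorem is det_deriv n F_1 F_3, and (i)-(iii) give two linear equations
  for det_deriv n F_1 F_2 and det_deriv n F_1 F_3 in terms of det F_1, whose solution is
  the claimed identity.
*)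

section \<open>Permutation expansions of determinants\<close>

lemma det_mat_expansion:
  "det (mat n n (\<lambda>(i, j). M i j)) =
     (\<Sum>p | p permutes {0..<n}. signof p * (\<Prod>i = 0..<n. M i (p i)))"
  by (auto simp: det_def'[of _ n] permutes_in_image intro!: sum.cong prod.cong)

lemma det_row_replaced:
  assumes "k < n"
  shows "det (mat n n (\<lambda>(i, j). if i = k then B i j else A i j)) =
     (\<Sum>p | p permutes {0..<n}. signof p * (B k (p k) * (\<Prod>i \<in> {0..<n} - {k}. A i (p i))))"
  using assms by (simp add: det_mat_expansion prod.delta_remove)

lemma det_col_replaced:
  assumes "j < n"
  shows "det (mat n n (\<lambda>(i, j'). if j' = j then B i j' else A i j')) =
     (\<Sum>p | p permutes {0..<n}.
        signof p * (B (inv_into UNIV p j) j *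
          (\<Prod>i \<in> {0..<n} - {inv_into UNIV p j}. A i (p i))))"
proof -
  have "(\<Prod>i = 0..<n. if p i = j then B i (p i) else A i (p i)) =
        B (inv_into UNIV p j) j * (\<Prod>i \<in> {0..<n} - {inv_into UNIV p j}. A i (p i))"
    if p: "p permutes {0..<n}" for p
  proof -
    have "p i = j \<longleftrightarrow> i = inv_into UNIV p j" for i
      using p by (metis permutes_inverses)
    moreover have "inv_into UNIV p j < n"
      using p assms by (simp add: permutes_inv permutes_in_image)
    ultimately show ?thesis
      using p by (simp add: prod.delta_remove permutes_inverses(1))
  qed
  then show ?thesis
    by (auto simp: det_mat_expansion intro!: sum.cong)
qed

section \<open>The derivative of the determinant\<close>

definition det_deriv :: "nat \<Rightarrow> (nat \<Rightarrow> nat \<Rightarrow> 'a::comm_ring_1) \<Rightarrow> (nat \<Rightarrow> nat \<Rightarrow> 'a) \<Rightarrow> 'a"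
  where "det_deriv n A B = (\<Sum>k = 0..<n. det (mat n n (\<lambda>(i, j). if i = k then B i j else A i j)))"

text \<open>In this form \<open>det_deriv n A B\<close> is visibly linear in \<open>B\<close>.\<close>
lemma det_deriv_expansion:
  "det_deriv n A B = (\<Sum>p | p permutes {0..<n}.
     signof p * (\<Sum>k = 0..<n. B k (p k) * (\<Prod>i \<in> {0..<n} - {k}. A i (p i))))"
  unfolding det_deriv_def
  by (simp add: det_row_replaced sum_distrib_left sum.swap[where A = "{0..<n}"])

lemma det_deriv_add: "det_deriv n A (\<lambda>i j. B i j + C i j) = det_deriv n A B + det_deriv n A C"
  by (simp add: det_deriv_expansion distrib_right sum.distrib distrib_left)

lemma det_deriv_diff: "det_deriv n A (\<lambda>i j. B i j - C i j) = det_deriv n A B - det_deriv n A C"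
  by (simp add: det_deriv_expansion left_diff_distrib sum_subtractf right_diff_distrib)

lemma det_deriv_scale: "det_deriv n A (\<lambda>i j. c * B i j) = c * det_deriv n A B"
  by (simp add: det_deriv_expansion sum_distrib_left mult_ac)

lemma det_deriv_row_weights:
  "det_deriv n A (\<lambda>i j. g i * A i j) = (\<Sum>i = 0..<n. g i) * det (mat n n (\<lambda>(i, j). A i j))"
proof -
  have "A k (p k) * (\<Prod>i \<in> {0..<n} - {k}. A i (p i)) = (\<Prod>i = 0..<n. A i (p i))"
    if "k < n" for k and p :: "nat \<Rightarrow> nat"
    using that by (simp add: prod.remove[of "{0..<n}" k])
  then show ?thesis
    by (simp add: det_deriv_expansion det_mat_expansion mult.assoc sum_distrib_left
        sum_distrib_right mult.left_commute)
qed

text \<open>Reading \<open>det_deriv\<close> column by column: reindexing each permutation term by columns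
  turns the sum of row-replaced determinants into a sum of column-replaced ones.\<close>
lemma det_deriv_col_weights:
  "det_deriv n A (\<lambda>i j. h j * B i j) =
     (\<Sum>j = 0..<n. h j * det (mat n n (\<lambda>(i, j'). if j' = j then B i j' else A i j')))"
proof -
  have reindex: "(\<Sum>k = 0..<n. h (p k) * (B k (p k) * Q k)) =
      (\<Sum>j = 0..<n. h j * (B (inv_into UNIV p j) j * Q (inv_into UNIV p j)))"
    if p: "p permutes {0..<n}" for p and Q :: "nat \<Rightarrow> 'a"
    using sum.reindex_bij_betw[OF permutes_imp_bij[OF p],
        of "\<lambda>j. h j * (B (inv_into UNIV p j) j * Q (inv_into UNIV p j))"] p
    by (simp add: permutes_inverses(2))
  have "det_deriv n A (\<lambda>i j. h j * B i j) = (\<Sum>p | p permutes {0..<n}. signof p *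
      (\<Sum>j = 0..<n. h j * (B (inv_into UNIV p j) j *
        (\<Prod>i \<in> {0..<n} - {inv_into UNIV p j}. A i (p i)))))"
    by (auto simp: det_deriv_expansion reindex mult.assoc intro!: sum.cong)
  then show ?thesis
    by (simp add: det_col_replaced sum_distrib_left sum.swap[where B = "{0..<n}"] mult_ac)
qed

lemma det_deriv_col_scaling:
  "det_deriv n A (\<lambda>i j. h j * A i j) = (\<Sum>j = 0..<n. h j) * det (mat n n (\<lambda>(i, j). A i j))"
  by (simp add: det_deriv_col_weights sum_distrib_right)

text \<open>Fact (iii): if \<open>B\<close> is \<open>A\<close> shifted left by one column, replacing column \<open>j < n - 1\<close>
  of \<open>A\<close> by that of \<open>B\<close> duplicates column \<open>j + 1\<close>, so only the last column contributes.\<close>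
lemma det_deriv_shifted_col_weights:
  assumes shift: "\<And>i j. j + 1 < n \<Longrightarrow> B i j = A i (j + 1)" and "0 < n"
  shows "det_deriv n A (\<lambda>i j. h j * B i j) = h (n - 1) * det_deriv n A B"
proof -
  define C where "C j = det (mat n n (\<lambda>(i, j'). if j' = j then B i j' else A i j'))" for j
  have "C j = 0" if "j + 1 < n" for j
    unfolding C_def using that shift
    by (intro det_identical_columns[of _ n j "j + 1"]) (auto intro!: eq_vecI)
  then have last_only: "(\<Sum>j = 0..<n. f j * C j) = f (n - 1) * C (n - 1)" for f
    using \<open>0 < n\<close> by (cases n) auto
  have expand: "det_deriv n A (\<lambda>i j. f j * B i j) = (\<Sum>j = 0..<n. f j * C j)" for f
    unfolding C_def by (rule det_deriv_col_weights)
  show ?thesis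
    using expand[of h] expand[of "\<lambda>_. 1"] last_only[of h] last_only[of "\<lambda>_. 1"] by simp
qed

section \<open>Matrices of reciprocal factorials\<close>

text \<open>\<open>1/(m-1)! = m/m!\<close>, valid for all integers under the convention \<open>1/m! = 0\<close> for
  \<open>m < 0\<close>.\<close>
lemma inv_fact_pred: "inv_fact (m - 1) = of_int m * inv_fact m"
proof (cases "m > 0")
  case True
  then obtain k where "m = int k + 1"
    by (metis add.commute int_ops(2) of_nat_Suc pos_int_cases Suc_pred')
  moreover have "(fact (Suc k) :: real) = (1 + real k) * fact k"
    by (simp add: fact_Suc)
  ultimately show ?thesis by (simp add: inv_fact_def nat_add_distrib add.commute[of "real k"])
next
  case False
  then show ?thesis by (auto simp: inv_fact_def)
qed

text \<open>The matrix with entries \<open>1/(a i - j - s)!\<close> (rows and columns indexed from 0).\<close>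
definition recip_fact_mat :: "(nat \<Rightarrow> int) \<Rightarrow> nat \<Rightarrow> nat \<Rightarrow> nat \<Rightarrow> real"
  where "recip_fact_mat a s i j = inv_fact (a i - int (j + s))"

text \<open>Both recurrences are stated for \<open>t = s + 1\<close> so that they apply to numerals.\<close>
lemma recip_fact_mat_step:
  assumes "t = s + 1"
  shows "recip_fact_mat a t i j = (of_int (a i) - real (j + s)) * recip_fact_mat a s i j"
  unfolding recip_fact_mat_def assms using inv_fact_pred[of "a i - int (j + s)"]
  by (simp add: algebra_simps)

lemma recip_fact_mat_shift:
  assumes "t = s + 1"
  shows "recip_fact_mat a t i j = recip_fact_mat a s i (j + 1)"
  unfolding recip_fact_mat_def assms by simp

text \<open>The entries of the left-hand side matrices of the theorem.\<close>
lemma recip_fact_mat_3: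
  "recip_fact_mat a 3 i j =
     recip_fact_mat a 1 i j * of_int ((a i - int (j + 1)) * (a i - int (j + 1) - 1))"
proof -
  have "recip_fact_mat a 3 i j = (of_int (a i) - real (j + 2)) * recip_fact_mat a 2 i j"
    by (rule recip_fact_mat_step) simp
  also have "recip_fact_mat a 2 i j = (of_int (a i) - real (j + 1)) * recip_fact_mat a 1 i j"
    by (rule recip_fact_mat_step) simp
  finally show ?thesis by (simp add: algebra_simps)
qed

text \<open>From \<open>F\<^sub>2 = (a i - j - 1) F\<^sub>1\<close> and facts (i), (ii).\<close>
lemma det_deriv_recip_fact_2:
  "det_deriv n (recip_fact_mat a 1) (recip_fact_mat a 2) =
     ((\<Sum>i = 0..<n. of_int (a i)) - (\<Sum>j = 0..<n. real (j + 1))) *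
     det (mat n n (\<lambda>(i, j). recip_fact_mat a 1 i j))"
proof -
  have "recip_fact_mat a 2 = (\<lambda>i j.
      of_int (a i) * recip_fact_mat a 1 i j - real (j + 1) * recip_fact_mat a 1 i j)"
    using recip_fact_mat_step[of 2 1 a] by (simp add: fun_eq_iff left_diff_distrib)
  then show ?thesis
    by (simp add: det_deriv_diff det_deriv_row_weights det_deriv_col_scaling left_diff_distrib)
qed

text \<open>From \<open>a i F\<^sub>2 = F\<^sub>3 + (j + 2) F\<^sub>2\<close> and fact (iii), as \<open>F\<^sub>2\<close> is \<open>F\<^sub>1\<close> shifted.\<close>
lemma det_deriv_recip_fact_weighted:
  "det_deriv n (recip_fact_mat a 1) (\<lambda>i j. of_int (a i) * recip_fact_mat a 2 i j) =
     det_deriv n (recip_fact_mat a 1) (recip_fact_mat a 3) +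
     (real n + 1) * det_deriv n (recip_fact_mat a 1) (recip_fact_mat a 2)"
proof (cases "n = 0")
  case True
  then show ?thesis by (simp add: det_deriv_def)
next
  case False
  have "(\<lambda>i j. of_int (a i) * recip_fact_mat a 2 i j) =
      (\<lambda>i j. recip_fact_mat a 3 i j + real (j + 2) * recip_fact_mat a 2 i j)"
    using recip_fact_mat_step[of 3 2 a] by (simp add: fun_eq_iff algebra_simps)
  moreover have "det_deriv n (recip_fact_mat a 1) (\<lambda>i j. real (j + 2) * recip_fact_mat a 2 i j) =
      (real n + 1) * det_deriv n (recip_fact_mat a 1) (recip_fact_mat a 2)"
    using det_deriv_shifted_col_weights[of n "recip_fact_mat a 2" "recip_fact_mat a 1"]
      recip_fact_mat_shift[of 2 1 a] False
    by (simp add: of_nat_diff)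
  ultimately show ?thesis by (simp add: det_deriv_add)
qed

text \<open>Expanding \<open>F\<^sub>3 = (a i - j - 2)(a i - j - 1) F\<^sub>1\<close> by linearity and combining with the
  two previous lemmas eliminates \<open>det_deriv n F\<^sub>1 (a i F\<^sub>2)\<close>.\<close>
lemma det_deriv_recip_fact_3:
  "det_deriv n (recip_fact_mat a 1) (recip_fact_mat a 3) =
     (\<Sum>k = 0..<n. (of_int (a k) - real (k + 1)) * (of_int (a k) - 2 * real n + real (k + 1) - 1)) *
     det (mat n n (\<lambda>(i, j). recip_fact_mat a 1 i j))"
proof -
  let ?D = "det_deriv n (recip_fact_mat a 1)"
  let ?d = "det (mat n n (\<lambda>(i, j). recip_fact_mat a 1 i j))"
  define \<alpha> where "\<alpha> i = real_of_int (a i)" for i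
  define J where "J j = real (j + 1)" for j
  have F2: "recip_fact_mat a 2 i j = (\<alpha> i - J j) * recip_fact_mat a 1 i j" for i j
    using recip_fact_mat_step[of 2 1 a] by (simp add: \<alpha>_def J_def)
  have F3: "recip_fact_mat a 3 i j = (\<alpha> i - J j - 1) * recip_fact_mat a 2 i j" for i j
    using recip_fact_mat_step[of 3 2 a] by (simp add: \<alpha>_def J_def)
  have "recip_fact_mat a 3 = (\<lambda>i j.
      2 * (\<alpha> i * recip_fact_mat a 2 i j) + J j ^ 2 * recip_fact_mat a 1 i j -
      (\<alpha> i ^ 2 * recip_fact_mat a 1 i j + recip_fact_mat a 2 i j))"
    by (simp add: fun_eq_iff F3 F2 algebra_simps power2_eq_square)
  then have "?D (recip_fact_mat a 3) =
      2 * ?D (\<lambda>i j. \<alpha> i * recip_fact_mat a 2 i j) + (\<Sum>j = 0..<n. J j ^ 2) * ?d -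
      ((\<Sum>i = 0..<n. \<alpha> i ^ 2) * ?d + ?D (recip_fact_mat a 2))"
    by (simp add: det_deriv_add det_deriv_diff det_deriv_scale det_deriv_row_weights
        det_deriv_col_scaling)
  moreover have "?D (\<lambda>i j. \<alpha> i * recip_fact_mat a 2 i j) =
      ?D (recip_fact_mat a 3) + (real n + 1) * ?D (recip_fact_mat a 2)"
    unfolding \<alpha>_def by (rule det_deriv_recip_fact_weighted)
  ultimately have "?D (recip_fact_mat a 3) =
      (\<Sum>i = 0..<n. \<alpha> i ^ 2) * ?d - (\<Sum>j = 0..<n. J j ^ 2) * ?d -
      (2 * real n + 1) * ?D (recip_fact_mat a 2)"
    by (simp add: algebra_simps)
  also have "\<dots> = ((\<Sum>i = 0..<n. \<alpha> i ^ 2) - (\<Sum>j = 0..<n. J j ^ 2) -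
      (2 * real n + 1) * ((\<Sum>i = 0..<n. \<alpha> i) - (\<Sum>j = 0..<n. J j))) * ?d"
    unfolding det_deriv_recip_fact_2 \<alpha>_def J_def by (simp add: algebra_simps)
  also have "(\<Sum>i = 0..<n. \<alpha> i ^ 2) - (\<Sum>j = 0..<n. J j ^ 2) -
      (2 * real n + 1) * ((\<Sum>i = 0..<n. \<alpha> i) - (\<Sum>j = 0..<n. J j)) =
      (\<Sum>k = 0..<n. (\<alpha> k - J k) * (\<alpha> k - 2 * real n + J k - 1))"
  proof -
    have "(\<alpha> k - J k) * (\<alpha> k - 2 * real n + J k - 1) =
        \<alpha> k ^ 2 - J k ^ 2 - (2 * real n + 1) * (\<alpha> k - J k)" for k
      by (simp add: algebra_simps power2_eq_square)
    then show ?thesis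
      by (simp add: sum_subtractf sum_distrib_left right_diff_distrib)
  qed
  finally show ?thesis by (simp add: \<alpha>_def J_def)
qed

text \<open>With \<open>b i = a (i + 1)\<close>, the summands on the left are the row-replaced determinants
  of \<open>det_deriv n F\<^sub>1 F\<^sub>3\<close>, indexed from 1.\<close>
theorem lemma4p2:
  fixes n :: nat and a :: "nat \<Rightarrow> int"
  assumes incr: "\<And>i j. 1 \<le> i \<Longrightarrow> i < j \<Longrightarrow> j \<le> n \<Longrightarrow> a i < a j"
    and pos: "\<And>i. 1 \<le> i \<Longrightarrow> i \<le> n \<Longrightarrow> a i > 0"
    and bound: "\<And>i. 1 \<le> i \<Longrightarrow> i \<le> n \<Longrightarrow> a i \<le> 2 * int i - 1"
  shows "(\<Sum>k=1..n. det (mat n n (\<lambda>(i, j).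
            inv_fact (a (i+1) - int (j+1)) *
            (if i + 1 \<noteq> k then 1
             else of_int ((a (i+1) - int (j+1)) * (a (i+1) - int (j+1) - 1))))))
       = of_int (\<Sum>k=1..n. (a k - int k) * (a k - 2 * int n + int k - 1))
         * det (mat n n (\<lambda>(i, j). inv_fact (a (i+1) - int (j+1))))"
proof -
  define b where "b i = a (i + 1)" for i
  have F1: "recip_fact_mat b 1 i j = inv_fact (a (i+1) - int (j+1))" for i j
    by (simp add: recip_fact_mat_def b_def)
  have F3: "recip_fact_mat b 3 i j = inv_fact (a (i+1) - int (j+1)) *
      of_int ((a (i+1) - int (j+1)) * (a (i+1) - int (j+1) - 1))" for i j
    unfolding recip_fact_mat_3 F1 by (simp add: b_def)
  have "(\<Sum>k=1..n. det (mat n n (\<lambda>(i, j).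
            inv_fact (a (i+1) - int (j+1)) *
            (if i + 1 \<noteq> k then 1
             else of_int ((a (i+1) - int (j+1)) * (a (i+1) - int (j+1) - 1))))))
      = det_deriv n (recip_fact_mat b 1) (recip_fact_mat b 3)"
    unfolding det_deriv_def F1 F3
    by (auto simp: sum.atLeast1_atMost_eq atLeast0LessThan fun_eq_iff
        intro!: sum.cong arg_cong[where f = det] arg_cong[where f = "mat n n"])
  also have "\<dots> = of_int (\<Sum>k=1..n. (a k - int k) * (a k - 2 * int n + int k - 1))
         * det (mat n n (\<lambda>(i, j). inv_fact (a (i+1) - int (j+1))))"
    unfolding det_deriv_recip_fact_3 F1
    by (simp add: sum.atLeast1_atMost_eq atLeast0LessThan b_def algebra_simps)
  finally show ?thesis .
qed

end
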